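(* For any nonempty configuration and integer shift $G$, the expected number of times a full execution of the inter-level sampler (Algorithm 1, run until it returns a level) enters the refinement loop (i.e. hits the boundary case $x=A_\ell(G)$) is at most $N/M(G)$.
   Context: Fix an integer $b\ge 2$. There is a set $\mathcal L$ of $N$ levels, which are consecutive integers. Each level $\ell$ holds a finite (possibly empty) multiset of normalized significands, each an integer in $[2^{b-1},2^b)$. Let $z$ be the total number of stored significands over all levels; assume $z<2^b$. For each level, $SS_\ell$ is the sum of its significands (so $SS_\ell=0$ iff the level is empty); set $SS_\ell=0$ for integers $\ell\notin\mathcal L$. The level weight is $W_\ell=SS_\ell2^\ell$. For an integer global shift $G$, $A_\ell(G)=\lfloor W_\ell2^G\rfloor+1$ if $SS_\ell>0$ and $A_\ell(G)=0$ if $SS_\ell=0$; $A(G)=\sum_\ell A_\ell(G)$ and $M(G)=\sum_\ell W_\ell2^G$. The configuration is nonempty if $z\ge1$. Inter-level sampler (Algorithm 1), with shift $G$ and $A=A(G)$: it performs independent outer iterations. In an outer iteration, draw $x$ uniformly from $\{1,\dots,A\}$ and scan the levels in decreasing order starting from the largest nonempty level. At the current level $\ell$: if $x<A_\ell(G)$, return $\ell$; if $x=A_\ell(G)$, run the refinement loop for $m=1,2,\dots$: draw $r$ uniformly from $\{0,\dots,2^b-1\}$ independently, let $t=\lfloor SS_\ell 2^{\ell+G+mb}\rfloor \bmod 2^b$; if $r<t$ return $\ell$; else if $r>t$ or $\ell+G+mb\ge 0$, abandon this outer iteration and start a new one; otherwise continue with $m+1$. If $x>A_\ell(G)$, set $x\leftarrow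 x-A_\ell(G)$ and move to the next lower level. *)

theory Defs
  imports "HOL-Probability.Probability"
begin

definition SSum :: "int set \<Rightarrow> (int \<Rightarrow> nat multiset) \<Rightarrow> int \<Rightarrow> nat" where
  "SSum L S l = (if l \<in> L then sum_mset (S l) else 0)"

definition Wt :: "int set \<Rightarrow> (int \<Rightarrow> nat multiset) \<Rightarrow> int \<Rightarrow> real" where
  "Wt L S l = real (SSum L S l) * 2 powr (real_of_int l)"

definition Al :: "int set \<Rightarrow> (int \<Rightarrow> nat multiset) \<Rightarrow> int \<Rightarrow> int \<Rightarrow> nat" where
  "Al L S G l = (if SSum L S l > 0
      then nat (\<lfloor>Wt L S l * 2 powr (real_of_int G)\<rfloor> + 1) else 0)"

definition Atot :: "int set \<Rightarrow> (int \<Rightarrow> nat multiset) \<Rightarrow> int \<Rightarrow> nat" where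
  "Atot L S G = (\<Sum>l\<in>L. Al L S G l)"

definition Mtot :: "int set \<Rightarrow> (int \<Rightarrow> nat multiset) \<Rightarrow> int \<Rightarrow> real" where
  "Mtot L S G = (\<Sum>l\<in>L. Wt L S l * 2 powr (real_of_int G))"

text \<open>Refinement loop for a level with sum s, starting at the exponent e = l+G+m*b
  (initially m = 1).  Result True = return the level, False = abandon the outer iteration.
  The nat argument is a step budget; the algorithm always stops (because of the test
  e >= 0) well before the budget nat(-(l+G)) + 1 is exhausted, so the budget-0 branch
  is never reached in the uses below.\<close>
primrec refine :: "nat \<Rightarrow> nat \<Rightarrow> nat \<Rightarrow> int \<Rightarrow> bool pmf" where
  "refine b s 0 e = return_pmf False"
| "refine b s (Suc k) e =
     pmf_of_set {0..<(2::nat)^b} \<bind> (\<lambda>r.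
       let t = nat (\<lfloor>real s * 2 powr (real_of_int e)\<rfloor> mod 2^b) in
       if r < t then return_pmf True
       else if r > t \<or> e \<ge> 0 then return_pmf False
       else refine b s k (e + int b))"

text \<open>Scanning the levels (given as a list in decreasing order) with the current value x.
  Result: (returned?, boundary case hit?).\<close>
fun scan :: "nat \<Rightarrow> int set \<Rightarrow> (int \<Rightarrow> nat multiset) \<Rightarrow> int \<Rightarrow> int list \<Rightarrow> nat
             \<Rightarrow> (bool \<times> bool) pmf" where
  "scan b L S G [] x = return_pmf (False, False)"
| "scan b L S G (l # ls) x =
     (if x < Al L S G l then return_pmf (True, False)
      else if x = Al L S G l then
        map_pmf (\<lambda>ok. (ok, True))
          (refine b (SSum L S l) (nat (- (l + G)) + 1) (l + G + int b))
      else scan b L S G ls (x - Al L S G l))"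

text \<open>One outer iteration of Algorithm 1 for levels L = {lo ..< lo + N}:
  draw x uniformly from {1..A}, scan levels in decreasing order.
  (Empty levels have A_l = 0 and are passed over without effect, so starting
  at the top level of L is the same as starting at the largest nonempty level.)\<close>
definition outer_iter :: "nat \<Rightarrow> int \<Rightarrow> nat \<Rightarrow> (int \<Rightarrow> nat multiset) \<Rightarrow> int
                          \<Rightarrow> (bool \<times> bool) pmf" where
  "outer_iter b lo N S G =
     (let L = {lo..<lo + int N} in
      pmf_of_set {1..Atot L S G} \<bind>
        (\<lambda>x. scan b L S G (rev [lo..lo + int N - 1]) x))"

text \<open>Full execution: an i.i.d. stream of outer iterations; the run stops at the first
  iteration that returns.\<close>
definition boundary_hits :: "(bool \<times> bool) stream \<Rightarrow> ennreal" where
  "boundary_hits \<omega> =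
     (\<Sum>i. if (\<forall>j<i. \<not> fst (\<omega> !! j)) \<and> snd (\<omega> !! i) then 1 else 0)"

definition expected_boundary_hits :: "nat \<Rightarrow> int \<Rightarrow> nat \<Rightarrow> (int \<Rightarrow> nat multiset) \<Rightarrow> int
                                      \<Rightarrow> ennreal" where
  "expected_boundary_hits b lo N S G =
     (\<integral>\<^sup>+ \<omega>. boundary_hits \<omega> \<partial>stream_space (measure_pmf (outer_iter b lo N S G)))"

end

theory Submission
  imports Defs
begin

text \<open>In one outer iteration, with x uniform on {1..A}, the scan reaches the boundary case of a
level l only when the running value of x equals A_l, which happens for at most one initial x; so
an iteration hits a boundary with probability at most N/A.  Conversely, level l returns for the
A_l - 1 values of x below its boundary, and at the boundary the refinement loop, which compares
uniform base-2^b digits with the expansion of W_l 2^G, returns with probability at least the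
fractional part of W_l 2^G; so an iteration returns with probability at least M/A.  As the
iterations are i.i.d. and the run stops at the first return, the expected number of boundary hits
is P(hit) / P(return), which is at most N/M.\<close>

lemma frac_divide_of_int:
  fixes z :: real and m :: int
  assumes "m > 0"
  shows "frac (z / of_int m) = (of_int (\<lfloor>z\<rfloor> mod m) + frac z) / of_int m"
proof -
  have "\<lfloor>z / of_int m\<rfloor> = \<lfloor>z\<rfloor> div m"
    using floor_divide_real_eq_div[of m z] assms by simp
  moreover have "of_int (\<lfloor>z\<rfloor> mod m) = (of_int \<lfloor>z\<rfloor> - of_int m * of_int (\<lfloor>z\<rfloor> div m) :: real)"
    by (simp add: minus_div_mult_eq_mod[symmetric])
  ultimately show ?thesis
    using assms by (simp add: frac_def field_simps)
qed

lemma sum_atLeastLessThan_int_conv_rev_upto: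
  "(\<Sum>l\<in>{lo..<lo + int N}. f l) = (\<Sum>l\<leftarrow>rev [lo..lo + int N - 1]. f l)"
proof -
  have levels: "{lo..<lo + int N} = set (rev [lo..lo + int N - 1])"
    by auto
  show ?thesis
    unfolding levels by (rule sum.distinct_set_conv_list) simp
qed

lemma nn_integral_indicator_pmf:
  "(\<integral>\<^sup>+x. (if P x then 1 else 0) \<partial>measure_pmf D) = ennreal (measure_pmf.prob D {x. P x})"
proof -
  have "(\<integral>\<^sup>+x. (if P x then 1 else 0) \<partial>measure_pmf D) = (\<integral>\<^sup>+x. indicator {x. P x} x \<partial>measure_pmf D)"
    by (intro nn_integral_cong) (simp add: indicator_def)
  then show ?thesis
    by (simp add: measure_pmf.emeasure_eq_measure)
qed

lemma measure_bind_pmf_of_set: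
  assumes "finite A" "A \<noteq> {}"
  shows "measure_pmf.prob (pmf_of_set A \<bind> f) E = (\<Sum>x\<in>A. measure_pmf.prob (f x) E) / real (card A)"
proof -
  have "ennreal (measure_pmf.prob (pmf_of_set A \<bind> f) E) = (\<integral>\<^sup>+x. emeasure (measure_pmf (f x)) E \<partial>measure_pmf (pmf_of_set A))"
    by (simp add: measure_pmf.emeasure_eq_measure[symmetric])
  also have "\<dots> = (\<Sum>x\<in>A. emeasure (measure_pmf (f x)) E) / of_nat (card A)"
    using assms by (simp add: nn_integral_pmf_of_set)
  also have "\<dots> = ennreal ((\<Sum>x\<in>A. measure_pmf.prob (f x) E) / real (card A))"
    using assms by (simp add: measure_pmf.emeasure_eq_measure divide_ennreal sum_nonneg
        ennreal_of_nat_eq_real_of_nat card_gt_0_iff)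
  finally show ?thesis
    by (simp add: divide_nonneg_nonneg sum_nonneg)
qed

definition boundary_hit_at :: "nat \<Rightarrow> (bool \<times> bool) stream \<Rightarrow> ennreal" where
  "boundary_hit_at i \<omega> = (if (\<forall>j<i. \<not> fst (\<omega> !! j)) \<and> snd (\<omega> !! i) then 1 else 0)"

lemma boundary_hits_eq_suminf: "boundary_hits \<omega> = (\<Sum>i. boundary_hit_at i \<omega>)"
  by (simp add: boundary_hits_def boundary_hit_at_def)

lemma boundary_hit_at_0: "boundary_hit_at 0 (x ## \<omega>) = (if snd x then 1 else 0)"
  by (simp add: boundary_hit_at_def)

lemma boundary_hit_at_Suc:
  "boundary_hit_at (Suc i) (x ## \<omega>) = (if fst x then 0 else 1) * boundary_hit_at i \<omega>"
proof -
  have "(\<forall>j<Suc i. P j) \<longleftrightarrow> P 0 \<and> (\<forall>j<i. P (Suc j))" for P :: "nat \<Rightarrow> bool"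
    by (auto simp: less_Suc_eq_0_disj)
  then show ?thesis
    by (simp add: boundary_hit_at_def)
qed

lemma measurable_boundary_hit_at [measurable]:
  "boundary_hit_at i \<in> borel_measurable (stream_space (measure_pmf D))"
proof -
  have [measurable]: "Measurable.pred (stream_space (measure_pmf D)) (\<lambda>\<omega>. P (\<omega> !! j))"
    for j and P :: "bool \<times> bool \<Rightarrow> bool"
    by (rule measurable_compose[OF measurable_snth]) simp
  show ?thesis
    unfolding boundary_hit_at_def by measurable
qed

lemma nn_integral_boundary_hits_upto_Suc:
  fixes D :: "(bool \<times> bool) pmf"
  defines "E n \<equiv> \<integral>\<^sup>+\<omega>. (\<Sum>i<n. boundary_hit_at i \<omega>) \<partial>stream_space (measure_pmf D)"
  shows "E (Suc n) = ennreal (measure_pmf.prob D {x. snd x})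
                   + ennreal (1 - measure_pmf.prob D {x. fst x}) * E n"
proof -
  interpret S: prob_space "stream_space (measure_pmf D)"
    by (rule prob_space.prob_space_stream_space[OF prob_space_measure_pmf])
  have prefix: "(\<Sum>i<Suc n. boundary_hit_at i (x ## \<omega>))
      = (if snd x then 1 else 0) + (if fst x then 0 else 1) * (\<Sum>i<n. boundary_hit_at i \<omega>)" for x \<omega>
    by (simp only: sum.lessThan_Suc_shift boundary_hit_at_0 boundary_hit_at_Suc sum_distrib_left)
  have "E (Suc n) = (\<integral>\<^sup>+x. (\<integral>\<^sup>+\<omega>. (\<Sum>i<Suc n. boundary_hit_at i (x ## \<omega>))
                              \<partial>stream_space (measure_pmf D)) \<partial>measure_pmf D)"
    unfolding E_def by (rule prob_space.nn_integral_stream_space[OF prob_space_measure_pmf]) measurable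
  also have "\<dots> = (\<integral>\<^sup>+x. (if snd x then 1 else 0) + (if fst x then 0 else 1) * E n \<partial>measure_pmf D)"
    unfolding prefix E_def
    by (intro nn_integral_cong, subst nn_integral_add) (auto simp: nn_integral_cmult S.emeasure_space_1)
  also have "\<dots> = ennreal (measure_pmf.prob D {x. snd x})
                 + (\<integral>\<^sup>+x. (if fst x then 0 else 1) \<partial>measure_pmf D) * E n"
    by (subst nn_integral_add) (auto simp: nn_integral_multc nn_integral_indicator_pmf)
  also have "(\<integral>\<^sup>+x. (if fst x then 0 else 1) \<partial>measure_pmf D)
      = (\<integral>\<^sup>+x. (if \<not> fst x then 1 else 0) \<partial>measure_pmf D)"
    by (intro nn_integral_cong) simp
  also have "\<dots> = ennreal (1 - measure_pmf.prob D {x. fst x})"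
    using nn_integral_indicator_pmf[of D "\<lambda>x. \<not> fst x"] measure_pmf.prob_compl[of "{x. fst x}" D]
    by (simp add: Compl_eq_Diff_UNIV[symmetric] Collect_neg_eq)
  finally show ?thesis .
qed

text \<open>The number of iterations that are reached is geometric, so the expected number of
boundary hits is P(hit) / P(return).\<close>

lemma nn_integral_boundary_hits_le:
  fixes B :: real
  assumes "B \<ge> 0"
    and hit_le: "measure_pmf.prob D {x. snd x} \<le> measure_pmf.prob D {x. fst x} * B"
  shows "(\<integral>\<^sup>+\<omega>. boundary_hits \<omega> \<partial>stream_space (measure_pmf D)) \<le> ennreal B"
proof -
  have upto_le: "(\<integral>\<^sup>+\<omega>. (\<Sum>i<n. boundary_hit_at i \<omega>) \<partial>stream_space (measure_pmf D)) \<le> ennreal B" for n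
  proof (induction n)
    case (Suc n)
    let ?a = "measure_pmf.prob D {x. snd x}" and ?p = "measure_pmf.prob D {x. fst x}"
    have "ennreal ?a + ennreal (1 - ?p) * ennreal B = ennreal (?a + (1 - ?p) * B)"
      using \<open>B \<ge> 0\<close> by (simp add: ennreal_mult ennreal_plus)
    also have "\<dots> \<le> ennreal B"
      using hit_le by (intro ennreal_leI) (simp add: algebra_simps)
    finally show ?case
      using Suc.IH unfolding nn_integral_boundary_hits_upto_Suc
      by (meson add_left_mono mult_left_mono order_trans zero_le)
  qed simp
  have "(\<integral>\<^sup>+\<omega>. boundary_hits \<omega> \<partial>stream_space (measure_pmf D))
      = (\<Sum>i. \<integral>\<^sup>+\<omega>. boundary_hit_at i \<omega> \<partial>stream_space (measure_pmf D))"
    unfolding boundary_hits_eq_suminf by (rule nn_integral_suminf) simp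
  also have "\<dots> \<le> ennreal B"
    unfolding suminf_eq_SUP using upto_le by (intro SUP_least) (simp add: nn_integral_sum)
  finally show ?thesis .
qed

lemma pmf_refine_Suc_True:
  fixes b s k :: nat and e :: int
  defines "t \<equiv> nat (\<lfloor>real s * 2 powr real_of_int e\<rfloor> mod 2 ^ b)"
  shows "pmf (refine b s (Suc k) e) True
    = (real t + (if e \<ge> 0 then 0 else pmf (refine b s k (e + int b)) True)) / 2 ^ b"
proof -
  define c where "c = (if e \<ge> 0 then 0 else pmf (refine b s k (e + int b)) True)"
  have "t < 2 ^ b"
    unfolding t_def by (simp add: nat_less_iff)
  have step: "pmf (if r < t then return_pmf True else if t < r \<or> 0 \<le> e then return_pmf False
      else refine b s k (e + int b)) True = (if r < t then 1 else if r = t then c else 0)" for r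
    by (cases "r < t"; cases "t < r") (auto simp: c_def)
  have "pmf (refine b s (Suc k) e) True
      = (\<Sum>r\<in>{0..<(2::nat) ^ b}. if r < t then 1 else if r = t then c else 0) / 2 ^ b"
    by (simp add: Let_def t_def[symmetric] pmf_bind_pmf_of_set step del: atLeast0LessThan)
  also have "(\<Sum>r\<in>{0..<(2::nat) ^ b}. if r < t then 1 else if r = t then c else 0)
      = (\<Sum>r\<in>{0..<(2::nat) ^ b}. if r < t then 1 else 0) + (\<Sum>r\<in>{0..<(2::nat) ^ b}. if r = t then c else 0)"
    by (subst sum.distrib[symmetric]) (intro sum.cong, auto)
  also have "(\<Sum>r\<in>{0..<(2::nat) ^ b}. if r < t then 1 else 0) = real t"
    using \<open>t < 2 ^ b\<close> by (simp add: sum.If_cases Int_absorb1 subset_eq del: atLeast0LessThan)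
  also have "(\<Sum>r\<in>{0..<(2::nat) ^ b}. if r = t then c else 0) = c"
    using \<open>t < 2 ^ b\<close> by simp
  finally show ?thesis
    unfolding c_def .
qed

text \<open>The refinement loop compares uniform digits with the base-2^b digits of the fractional
part of s 2^e / 2^b and returns as soon as a uniform digit falls below the corresponding one; so
it returns with probability at least that fractional part, provided the budget k lets the
exponent reach 0, beyond which the fractional part vanishes.\<close>

lemma frac_le_pmf_refine_True:
  assumes "k \<ge> 1" and "e + int b * (int k - 1) \<ge> 0"
  shows "frac (real s * 2 powr real_of_int e / 2 ^ b) \<le> pmf (refine b s k e) True"
  using assms
proof (induction k arbitrary: e)
  case (Suc k)
  define z where "z = real s * 2 powr real_of_int e"
  define c where "c = (if e \<ge> 0 then 0 else pmf (refine b s k (e + int b)) True)"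
  have "frac z \<le> c"
  proof (cases "e \<ge> 0")
    case True
    then have "z = real (s * 2 ^ nat e)"
      unfolding z_def by (simp add: powr_realpow[symmetric])
    then have "frac z = 0"
      by simp
    then show ?thesis
      using True by (simp add: c_def del: frac_eq_0_iff)
  next
    case False
    then have "k \<ge> 1" and "(e + int b) + int b * (int k - 1) \<ge> 0"
      using Suc.prems by (cases k; simp add: algebra_simps)+
    then have "frac (real s * 2 powr real_of_int (e + int b) / 2 ^ b) \<le> pmf (refine b s k (e + int b)) True"
      by (rule Suc.IH)
    moreover have "real s * 2 powr real_of_int (e + int b) / 2 ^ b = z"
      unfolding z_def by (simp add: powr_add powr_realpow)
    ultimately show ?thesis
      using False by (simp add: c_def)
  qed
  then have "frac (z / 2 ^ b) \<le> pmf (refine b s (Suc k) e) True"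
    using frac_divide_of_int[of "2 ^ b" z]
    unfolding pmf_refine_Suc_True z_def[symmetric] c_def[symmetric]
    by (simp add: divide_right_mono)
  then show ?case
    unfolding z_def .
qed simp

lemma frac_le_pmf_refine_initial:
  assumes "b \<ge> 1"
  shows "frac (real s * 2 powr real_of_int e) \<le> pmf (refine b s (nat (- e) + 1) (e + int b)) True"
proof -
  have "0 \<le> (e + int b) + int b * (int (nat (- e) + 1) - 1)"
  proof (cases "e \<ge> 0")
    case False
    then have "int b * e \<le> 1 * e"
      using assms by (intro mult_right_mono_neg) auto
    moreover have "int (nat (- e) + 1) - 1 = - e"
      using False by simp
    ultimately show ?thesis
      by (simp only:)
  qed simp
  from frac_le_pmf_refine_True[OF _ this]
  show ?thesis
    by (simp add: powr_add powr_realpow)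
qed

lemma sum_prob_scan_hit_le_length:
  "finite X \<Longrightarrow> (\<Sum>x\<in>X. measure_pmf.prob (scan b L S G ls x) {\<omega>. snd \<omega>}) \<le> real (length ls)"
proof (induction ls arbitrary: X)
  case (Cons l ls)
  define a where "a = Al L S G l"
  define g where "g y = measure_pmf.prob (scan b L S G ls y) {\<omega>. snd \<omega>}" for y
  have "measure_pmf.prob (scan b L S G (l # ls) x) {\<omega>. snd \<omega>}
      \<le> (if x = a then 1 else 0) + (if a < x then g (x - a) else 0)" for x
    by (cases x a rule: linorder_cases) (simp_all add: a_def g_def)
  then have "(\<Sum>x\<in>X. measure_pmf.prob (scan b L S G (l # ls) x) {\<omega>. snd \<omega>})
      \<le> (\<Sum>x\<in>X. if x = a then 1 else 0) + (\<Sum>x\<in>X. if a < x then g (x - a) else 0)"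
    by (simp add: sum_mono flip: sum.distrib)
  also have "(\<Sum>x\<in>X. if x = a then 1 else 0::real) \<le> 1"
    using Cons.prems by (simp add: sum.delta)
  also have "(\<Sum>x\<in>X. if a < x then g (x - a) else 0) = (\<Sum>x\<in>{x\<in>X. a < x}. g (x - a))"
    using Cons.prems by (simp add: sum.inter_filter)
  also have "\<dots> = (\<Sum>y\<in>(\<lambda>x. x - a) ` {x\<in>X. a < x}. g y)"
    by (subst sum.reindex) (auto simp: inj_on_def)
  also have "\<dots> \<le> real (length ls)"
    unfolding g_def using Cons.prems by (intro Cons.IH) auto
  finally show ?case
    by simp
qed simp

lemma weight_le_sum_prob_scan_return_head:
  assumes "b \<ge> 1"
  shows "Wt L S l * 2 powr real_of_int G
    \<le> (\<Sum>x\<in>{1..Al L S G l}. measure_pmf.prob (scan b L S G (l # ls) x) {\<omega>. fst \<omega>})"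
proof (cases "SSum L S l > 0")
  case True
  define w where "w = Wt L S l * 2 powr real_of_int G"
  define m where "m = nat \<lfloor>w\<rfloor>"
  have "w \<ge> 0"
    by (simp add: w_def Wt_def)
  then have "real m = of_int \<lfloor>w\<rfloor>" and Al_eq: "Al L S G l = Suc m"
    using True by (simp_all add: Al_def m_def w_def nat_add_distrib)
  have "frac (real (SSum L S l) * 2 powr real_of_int (l + G))
      \<le> pmf (refine b (SSum L S l) (nat (- (l + G)) + 1) (l + G + int b)) True"
    by (rule frac_le_pmf_refine_initial[OF assms])
  moreover have "real (SSum L S l) * 2 powr real_of_int (l + G) = w"
    by (simp add: w_def Wt_def powr_add)
  moreover have "{x. x} = {True}"
    by auto
  ultimately have "w \<le> real m + measure_pmf.prob (scan b L S G (l # ls) (Suc m)) {\<omega>. fst \<omega>}"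
    using True \<open>real m = of_int \<lfloor>w\<rfloor>\<close> Al_eq
    by (simp add: frac_def measure_pmf_single vimage_def del: refine.simps)
  also have "\<dots> = (\<Sum>x\<in>{1..Suc m}. measure_pmf.prob (scan b L S G (l # ls) x) {\<omega>. fst \<omega>})"
    using Al_eq by (simp add: sum.cl_ivl_Suc)
  finally show ?thesis
    unfolding w_def Al_eq .
qed (simp add: Wt_def sum_nonneg)

lemma sum_weight_le_sum_prob_scan_return:
  assumes "b \<ge> 1"
  shows "(\<Sum>l\<leftarrow>ls. Wt L S l * 2 powr real_of_int G)
     \<le> (\<Sum>x\<in>{1..sum_list (map (Al L S G) ls)}. measure_pmf.prob (scan b L S G ls x) {\<omega>. fst \<omega>})"
proof (induction ls)
  case (Cons l ls)
  define a where "a = Al L S G l"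
  define T where "T = sum_list (map (Al L S G) ls)"
  define F where "F x = measure_pmf.prob (scan b L S G (l # ls) x) {\<omega>. fst \<omega>}" for x
  have "(\<Sum>x\<in>{a + 1..a + T}. F x) = (\<Sum>x\<in>{1..T}. F (x + a))"
    using sum.shift_bounds_cl_nat_ivl[of F 1 a T] by (simp add: add.commute)
  also have "\<dots> = (\<Sum>x\<in>{1..T}. measure_pmf.prob (scan b L S G ls x) {\<omega>. fst \<omega>})"
    by (intro sum.cong) (auto simp: F_def a_def)
  finally have tail: "(\<Sum>x\<in>{a + 1..a + T}. F x)
      = (\<Sum>x\<in>{1..T}. measure_pmf.prob (scan b L S G ls x) {\<omega>. fst \<omega>})" .
  have "Wt L S l * 2 powr real_of_int G \<le> (\<Sum>x\<in>{1..a}. F x)"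
    unfolding F_def a_def by (rule weight_le_sum_prob_scan_return_head[OF assms])
  then have "Wt L S l * 2 powr real_of_int G + (\<Sum>l\<leftarrow>ls. Wt L S l * 2 powr real_of_int G)
      \<le> (\<Sum>x\<in>{1..a}. F x) + (\<Sum>x\<in>{a + 1..a + T}. F x)"
    using Cons.IH[folded T_def] unfolding tail by (rule add_mono)
  also have "\<dots> = (\<Sum>x\<in>{1..a + T}. F x)"
    by (rule sum.ub_add_nat[symmetric]) simp
  finally show ?case
    by (simp add: F_def a_def T_def)
qed simp

lemma exists_level_SSum_pos:
  assumes "\<forall>l\<in>L. \<forall>s\<in>#S l. s > 0" and "(\<Sum>l\<in>L. size (S l)) \<ge> 1"
  obtains l where "l \<in> L" and "SSum L S l > 0"
proof -
  obtain l where "l \<in> L" and "size (S l) \<noteq> 0"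
    using assms(2) by (metis not_one_le_zero sum.neutral)
  then obtain s where "s \<in># S l"
    by (metis multiset_nonemptyE size_eq_0_iff_empty)
  with assms(1) \<open>l \<in> L\<close> have "SSum L S l \<noteq> 0"
    by (auto simp: SSum_def)
  with \<open>l \<in> L\<close> show ?thesis
    by (intro that) simp_all
qed

lemma Atot_pos:
  assumes "finite L" and "l \<in> L" and "SSum L S l > 0"
  shows "Atot L S G > 0"
proof -
  have "Al L S G l > 0"
    using assms(3) by (simp add: Al_def Wt_def)
  then show ?thesis
    unfolding Atot_def using assms(1,2) by (metis gr0I sum_eq_0_iff)
qed

lemma Mtot_pos:
  assumes "finite L" and "l \<in> L" and "SSum L S l > 0"
  shows "Mtot L S G > 0"
  unfolding Mtot_def Wt_def using assms by (intro sum_pos2[where i = l]) auto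

lemma prob_outer_iter:
  fixes lo :: int and N :: nat
  defines "L \<equiv> {lo..<lo + int N}"
  assumes "Atot L S G > 0"
  shows "measure_pmf.prob (outer_iter b lo N S G) E
    = (\<Sum>x\<in>{1..Atot L S G}. measure_pmf.prob (scan b L S G (rev [lo..lo + int N - 1]) x) E)
        / real (Atot L S G)"
  using assms unfolding outer_iter_def L_def by (simp add: measure_bind_pmf_of_set Let_def)

lemma prob_outer_iter_hit_le:
  fixes lo :: int and N :: nat
  defines "L \<equiv> {lo..<lo + int N}"
  assumes "Atot L S G > 0"
  shows "measure_pmf.prob (outer_iter b lo N S G) {\<omega>. snd \<omega>} \<le> real N / real (Atot L S G)"
  unfolding prob_outer_iter[OF assms(2)[unfolded L_def]] L_def[symmetric]
  using sum_prob_scan_hit_le_length[of "{1..Atot L S G}" b L S G "rev [lo..lo + int N - 1]"]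
  by (simp add: divide_right_mono)

lemma prob_outer_iter_return_ge:
  fixes lo :: int and N :: nat
  defines "L \<equiv> {lo..<lo + int N}"
  assumes "b \<ge> 1" and "Atot L S G > 0"
  shows "Mtot L S G / real (Atot L S G) \<le> measure_pmf.prob (outer_iter b lo N S G) {\<omega>. fst \<omega>}"
proof -
  have "Atot L S G = sum_list (map (Al L S G) (rev [lo..lo + int N - 1]))"
    unfolding Atot_def L_def sum_atLeastLessThan_int_conv_rev_upto by simp
  then show ?thesis
    unfolding prob_outer_iter[OF assms(3)[unfolded L_def]] L_def[symmetric]
    using sum_weight_le_sum_prob_scan_return[OF assms(2), of L S G "rev [lo..lo + int N - 1]"]
    by (simp add: Mtot_def L_def sum_atLeastLessThan_int_conv_rev_upto divide_right_mono)
qed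

theorem mainTheorem4:
  fixes b :: nat and lo :: int and N :: nat and S :: "int \<Rightarrow> nat multiset" and G :: int
  defines "L \<equiv> {lo..<lo + int N}"
  assumes b2: "b \<ge> 2"
    and sig: "\<forall>l\<in>L. \<forall>s\<in>#S l. 2 ^ (b - 1) \<le> s \<and> s < 2 ^ b"
    and zbound: "(\<Sum>l\<in>L. size (S l)) < 2 ^ b"
    and nonempty: "(\<Sum>l\<in>L. size (S l)) \<ge> 1"
  shows "expected_boundary_hits b lo N S G \<le> ennreal (real N / Mtot L S G)"
proof -
  have "\<forall>l\<in>L. \<forall>s\<in>#S l. s > 0"
  proof (intro ballI)
    fix l s
    assume "l \<in> L" and "s \<in># S l"
    then have "2 ^ (b - 1) \<le> s"
      using sig by blast
    moreover have "(0::nat) < 2 ^ (b - 1)"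
      by simp
    ultimately show "s > 0"
      by linarith
  qed
  then obtain l where "l \<in> L" and "SSum L S l > 0"
    using nonempty by (rule exists_level_SSum_pos)
  then have A_pos: "Atot L S G > 0" and M_pos: "Mtot L S G > 0"
    by (simp_all add: L_def Atot_pos Mtot_pos)
  let ?D = "outer_iter b lo N S G"
  have "measure_pmf.prob ?D {\<omega>. snd \<omega>} \<le> real N / real (Atot L S G)"
    using A_pos unfolding L_def by (rule prob_outer_iter_hit_le)
  also have "\<dots> = Mtot L S G / real (Atot L S G) * (real N / Mtot L S G)"
    using M_pos by simp
  also have "\<dots> \<le> measure_pmf.prob ?D {\<omega>. fst \<omega>} * (real N / Mtot L S G)"
    using b2 A_pos M_pos unfolding L_def by (intro mult_right_mono prob_outer_iter_return_ge) simp_all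
  finally show ?thesis
    unfolding expected_boundary_hits_def using M_pos by (intro nn_integral_boundary_hits_le) simp_all
qed

end
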